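(* Consider an $(N,z)$-ensemble of one-dimensional random spring networks on the circle (defined in the context), $N\ge3$. Then for every fixed graph (conditioning on $\mathbf S$), $\operatorname{Var}(\Delta l\mid\mathbf S)=\frac2z\big(1-\frac1N\big)\operatorname{Var}(\bar l)$, and hence $$\operatorname{Var}(\Delta l)=\frac2z\Big(1-\frac1N\Big)\operatorname{Var}(\bar l),$$ and the expected conditional variance satisfies $$\frac{\mathbb E_{\bar l}\big[\operatorname{Var}(\Delta l\mid \bar l)\big]}{\operatorname{Var}(\bar l)}=\frac2z\Big(1-\frac1N\Big)\Big[1-\frac2z\Big(1-\frac1N\Big)\Big],$$ where $\operatorname{Var}(\bar l)=1/12$.
   Context: Let the circle be $\mathbb R/\mathbb Z$. Fix an integer $N\ge3$ and $z$ with $2\le z\le N-1$ and $M:=Nz/2$ an integer. An $(N,z)$-network is generated by: (i) node positions $x_1,\dots,x_N$ i.i.d. uniform on $\mathbb R/\mathbb Z$; (ii) node $k$ joined to node $k+1$ by a spring for $k=1,\dots,N$ (indices mod $N$); (iii) further springs between randomly chosen node pairs (random procedure independent of positions), at most one spring per unordered pair, until there are $M$ springs. A spring joining nodes $a<b$ is oriented from $a$ to $b$, with initial signed length $\bar l_e\in[-1/2,1/2)$ the representative of $x_b-x_a$ mod $1$ in $[-1/2,1/2)$; each $\bar l_e$ is uniform on $[-1/2,1/2)$. With $\mathbf C$ a signed cycle matrix of the resulting directed graph (fundamental cycles of a spanning tree, oriented arbitrarily, entries $\pm1$ for edges on a cycle with agreeing/opposite orientation, $0$ otherwise), the relaxed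 lengths are $\boldsymbol l^*=\mathbf C^T(\mathbf C\mathbf C^T)^{-1}\mathbf C\bar{\boldsymbol l}$ (minimizer of $\tfrac12\boldsymbol l^T\boldsymbol l$ subject to $\mathbf C\boldsymbol l=\mathbf C\bar{\boldsymbol l}$), $\mathbf S=\mathbf C^T(\mathbf C\mathbf C^T)^{-1}\mathbf C-\mathbf I$ and $\Delta\boldsymbol l=\mathbf S\bar{\boldsymbol l}$. Let $I$ be uniform on the $M$ springs, independent of everything else, and write $\Delta l:=\Delta l_I$, $\bar l:=\bar l_I$; all variances/conditional variances above refer to these random variables (e.g. $\operatorname{Var}(\Delta l\mid\mathbf S)=\frac1M\sum_i\operatorname{Var}(\Delta l_i\mid \mathbf S)$ since each $\Delta l_i$ has mean zero), and $\mathbb E_{\bar l}[\operatorname{Var}(\Delta l\mid\bar l)]=\int_{-1/2}^{1/2}\operatorname{Var}(\Delta l\mid\bar l=\bar\ell)\,d\bar\ell$. *)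

theory Defs
  imports "HOL-Probability.Probability"
begin

type_synonym edge = "nat \<times> nat"

text \<open>Nodes are 0..N-1 (paper's node k is our node k-1). A spring joining nodes a<b is
  the pair (a,b), oriented from a to b.\<close>

definition ring_edges :: "nat \<Rightarrow> edge set" where
  "ring_edges N = {(k, k + 1) | k. k + 1 < N} \<union> {(0, N - 1)}"

definition valid_net :: "nat \<Rightarrow> nat \<Rightarrow> edge set \<Rightarrow> bool" where
  "valid_net N M E \<longleftrightarrow> E \<subseteq> {(a, b). a < b \<and> b < N} \<and> ring_edges N \<subseteq> E \<and> card E = M"

definition und :: "edge set \<Rightarrow> (nat \<times> nat) set" where
  "und T = {(a, b). (a, b) \<in> T \<or> (b, a) \<in> T}"

definition spanning_tree :: "nat \<Rightarrow> edge set \<Rightarrow> edge set \<Rightarrow> bool" where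
  "spanning_tree N E T \<longleftrightarrow> T \<subseteq> E \<and> card T = N - 1 \<and>
     (\<forall>u < N. \<forall>v < N. (u, v) \<in> (und T)\<^sup>*)"

definition inc :: "nat \<Rightarrow> edge \<Rightarrow> real" where
  "inc v e = (if v = snd e then 1 else if v = fst e then -1 else 0)"

text \<open>Signed cycle matrix w.r.t. spanning tree T: the rows are indexed by the non-tree
  edges f \<in> E - T; row f is the signed fundamental cycle of T + f, i.e. a
  {-1,0,1}-vector supported on T \<union> {f}, nonzero at f (either orientation), which is
  a closed cycle (zero signed sum at every node).\<close>
definition signed_cycle_matrix :: "nat \<Rightarrow> edge set \<Rightarrow> edge set \<Rightarrow> (edge \<Rightarrow> edge \<Rightarrow> real) \<Rightarrow> bool" where
  "signed_cycle_matrix N E T C \<longleftrightarrow> spanning_tree N E T \<and>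
     (\<forall>f \<in> E - T. (\<forall>e. C f e \<in> {-1, 0, 1}) \<and> (\<forall>e. e \<notin> T \<union> {f} \<longrightarrow> C f e = 0) \<and>
        C f f \<noteq> 0 \<and> (\<forall>v < N. (\<Sum>e\<in>E. C f e * inc v e) = 0))"

text \<open>Representative of t mod 1 in [-1/2, 1/2).\<close>
definition wrap :: "real \<Rightarrow> real" where
  "wrap t = t - of_int \<lfloor>t + 1/2\<rfloor>"

definition slen :: "(nat \<Rightarrow> real) \<Rightarrow> edge \<Rightarrow> real" where
  "slen x e = wrap (x (snd e) - x (fst e))"

definition feasible :: "edge set \<Rightarrow> edge set \<Rightarrow> (edge \<Rightarrow> edge \<Rightarrow> real) \<Rightarrow> (edge \<Rightarrow> real) \<Rightarrow> (edge \<Rightarrow> real) set" where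
  "feasible E R C lb = {l. (\<forall>e. e \<notin> E \<longrightarrow> l e = 0) \<and>
      (\<forall>r \<in> R. (\<Sum>e\<in>E. C r e * l e) = (\<Sum>e\<in>E. C r e * lb e))}"

definition relaxed :: "edge set \<Rightarrow> edge set \<Rightarrow> (edge \<Rightarrow> edge \<Rightarrow> real) \<Rightarrow> (edge \<Rightarrow> real) \<Rightarrow> (edge \<Rightarrow> real)" where
  "relaxed E R C lb = (THE l. l \<in> feasible E R C lb \<and>
      (\<forall>l' \<in> feasible E R C lb. (\<Sum>e\<in>E. (l e)\<^sup>2 / 2) \<le> (\<Sum>e\<in>E. (l' e)\<^sup>2 / 2)))"

definition dl :: "edge set \<Rightarrow> edge set \<Rightarrow> (edge \<Rightarrow> edge \<Rightarrow> real) \<Rightarrow> edge \<Rightarrow> (nat \<Rightarrow> real) \<Rightarrow> real" where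
  "dl E R C i x = relaxed E R C (slen x) i - slen x i"

text \<open>Node positions: i.i.d. uniform on [0,1) (representatives of R/Z).\<close>
definition posM :: "nat \<Rightarrow> (nat \<Rightarrow> real) measure" where
  "posM N = PiM {..<N} (\<lambda>_. uniform_measure lborel {0..<1})"

definition graph_spring :: "edge set pmf \<Rightarrow> (edge set \<times> edge) pmf" where
  "graph_spring G = bind_pmf G (\<lambda>E. map_pmf (\<lambda>i. (E, i)) (pmf_of_set E))"

definition ens :: "nat \<Rightarrow> edge set pmf \<Rightarrow> ((edge set \<times> edge) \<times> (nat \<Rightarrow> real)) measure" where
  "ens N G = measure_pmf (graph_spring G) \<Otimes>\<^sub>M posM N"

definition cond_ens :: "nat \<Rightarrow> edge set \<Rightarrow> (edge \<times> (nat \<Rightarrow> real)) measure" where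
  "cond_ens N E = measure_pmf (pmf_of_set E) \<Otimes>\<^sub>M posM N"

definition lbarRV :: "(edge set \<times> edge) \<times> (nat \<Rightarrow> real) \<Rightarrow> real" where
  "lbarRV \<omega> = slen (snd \<omega>) (snd (fst \<omega>))"

definition dlRV :: "(edge set \<Rightarrow> edge set) \<Rightarrow> (edge set \<Rightarrow> edge \<Rightarrow> edge \<Rightarrow> real) \<Rightarrow>
    (edge set \<times> edge) \<times> (nat \<Rightarrow> real) \<Rightarrow> real" where
  "dlRV T C \<omega> = (let E = fst (fst \<omega>) in dl E (E - T E) (C E) (snd (fst \<omega>)) (snd \<omega>))"

definition Var :: "'a measure \<Rightarrow> ('a \<Rightarrow> real) \<Rightarrow> real" where
  "Var M X = (\<integral>\<omega>. (X \<omega> - (\<integral>\<omega>'. X \<omega>' \<partial>M))\<^sup>2 \<partial>M)"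

definition cond_Var :: "'a measure \<Rightarrow> 'a measure \<Rightarrow> ('a \<Rightarrow> real) \<Rightarrow> ('a \<Rightarrow> real)" where
  "cond_Var M F X = real_cond_exp M F (\<lambda>\<omega>. (X \<omega> - real_cond_exp M F X \<omega>)\<^sup>2)"

end

theory Submission
  imports Defs
begin

text \<open>The relaxed lengths are the orthogonal projection \<open>P\<close> of the initial lengths onto the
  span of the cycle rows, so \<open>\<Delta>l = S l\<close> with \<open>S = P - I\<close>. The initial lengths of distinct
  springs are uncorrelated with variance \<open>1/12\<close>; more precisely \<open>E[l\<^sub>j g(l\<^sub>k)] = 0\<close> for
  \<open>j \<noteq> k\<close>, because one endpoint of \<open>j\<close> is not an endpoint of \<open>k\<close>. Hence
  \<open>Var(\<Delta>l | S) = tr(S\<^sup>TS)/(12M) = (M - tr P)/(12M)\<close>, and \<open>tr P = M - N + 1\<close> is the number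
  of independent cycles. The same orthogonality gives \<open>E[\<Delta>l | l] = (tr S / M) l = -p l\<close> with
  \<open>p = (N - 1)/M = (2/z)(1 - 1/N)\<close>, so that \<open>E[Var(\<Delta>l | l)] = E[(\<Delta>l + p l)\<^sup>2] = (p - p\<^sup>2)/12\<close>.\<close>

section \<open>Orthogonal projection by Gram--Schmidt\<close>

definition dot :: "'a set \<Rightarrow> ('a \<Rightarrow> real) \<Rightarrow> ('a \<Rightarrow> real) \<Rightarrow> real" where
  "dot E f g = (\<Sum>e\<in>E. f e * g e)"

definition unit_vec :: "'a \<Rightarrow> 'a \<Rightarrow> real" where
  "unit_vec j = (\<lambda>e. if e = j then 1 else 0)"

text \<open>Gram--Schmidt: \<open>gs_proj E vs l\<close> is the orthogonal projection of \<open>l\<close> onto the span of \<open>vs\<close>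
  with respect to \<open>dot E\<close>; a vector \<open>v\<close> already in the span of the later ones contributes nothing.\<close>
fun gs_proj :: "'a set \<Rightarrow> ('a \<Rightarrow> real) list \<Rightarrow> ('a \<Rightarrow> real) \<Rightarrow> ('a \<Rightarrow> real)" where
  "gs_proj E [] l = (\<lambda>e. 0)"
| "gs_proj E (v # vs) l = (let u = (\<lambda>e. v e - gs_proj E vs v e) in
     if dot E u u = 0 then gs_proj E vs l
     else (\<lambda>e. gs_proj E vs l e + dot E u l / dot E u u * u e))"

lemma dot_commute: "dot E f g = dot E g f"
  unfolding dot_def by (simp add: mult.commute)

lemma dot_diff_left: "dot E (\<lambda>e. f e - g e) h = dot E f h - dot E g h"
  unfolding dot_def by (simp add: left_diff_distrib sum_subtractf)

lemma dot_diff_right: "dot E h (\<lambda>e. f e - g e) = dot E h f - dot E h g"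
  unfolding dot_def by (simp add: right_diff_distrib sum_subtractf)

lemma dot_add_right: "dot E h (\<lambda>e. f e + g e) = dot E h f + dot E h g"
  unfolding dot_def by (simp add: distrib_left sum.distrib)

lemma dot_mult_left: "dot E (\<lambda>e. c * g e) h = c * dot E g h"
  unfolding dot_def by (simp add: sum_distrib_left mult.assoc)

lemma dot_mult_divide_right: "dot E h (\<lambda>e. a * g e / b) = a * dot E h g / b"
  unfolding dot_def by (simp add: sum_distrib_left sum_divide_distrib mult.assoc mult.left_commute)

lemma dot_self_nonneg: "dot E u u \<ge> 0"
  unfolding dot_def by (auto intro: sum_nonneg)

lemma dot_self_eq_0_imp:
  assumes "finite E" "dot E u u = 0" "e \<in> E"
  shows "u e = 0"
  using assms sum_nonneg_eq_0_iff[of E "\<lambda>e. u e * u e"] by (auto simp: dot_def)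

lemma dot_cong:
  "(\<And>e. e \<in> E \<Longrightarrow> f e = f' e) \<Longrightarrow> (\<And>e. e \<in> E \<Longrightarrow> g e = g' e) \<Longrightarrow> dot E f g = dot E f' g'"
  unfolding dot_def by (rule sum.cong) auto

lemma dot_unit_vec_right: "finite E \<Longrightarrow> j \<in> E \<Longrightarrow> dot E u (unit_vec j) = u j"
  unfolding dot_def unit_vec_def by (simp add: if_distrib[where f="\<lambda>x. _ * x"] cong: if_cong)

lemma dot_unit_vec_left: "finite E \<Longrightarrow> j \<in> E \<Longrightarrow> dot E (unit_vec j) u = u j"
  using dot_unit_vec_right dot_commute by metis

lemma dot_gs_proj_eq_0:
  assumes "\<forall>v\<in>set vs. dot E w v = 0"
  shows "dot E w (gs_proj E vs l) = 0"
  using assms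
proof (induction vs arbitrary: l)
  case Nil
  then show ?case by (simp add: dot_def)
next
  case (Cons v vs)
  define u where "u = (\<lambda>e. v e - gs_proj E vs v e)"
  have "dot E w (gs_proj E vs l) = 0" "dot E w u = 0"
    using Cons by (auto simp: u_def dot_diff_right)
  then show ?case
    by (simp add: u_def[symmetric] Let_def dot_add_right dot_mult_divide_right)
qed

lemma dot_residual_gs_proj_eq_0:
  assumes "finite E" "v' \<in> set vs"
  shows "dot E (\<lambda>e. l e - gs_proj E vs l e) v' = 0"
  using assms(2)
proof (induction vs arbitrary: l v')
  case Nil
  then show ?case by simp
next
  case (Cons v vs)
  define u where "u = (\<lambda>e. v e - gs_proj E vs v e)"
  define c where "c = dot E u l / dot E u u"
  define r where "r = (\<lambda>e. l e - gs_proj E (v # vs) l e)"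
  have IH: "\<And>l. \<forall>v'\<in>set vs. dot E (\<lambda>e. l e - gs_proj E vs l e) v' = 0"
    using Cons.IH by blast
  have u_orth: "\<forall>v'\<in>set vs. dot E u v' = 0"
    using IH unfolding u_def by blast
  have r_degenerate: "r = (\<lambda>e. l e - gs_proj E vs l e)" if "dot E u u = 0"
    using that by (simp add: r_def u_def[symmetric] Let_def)
  have r_step: "r = (\<lambda>e. (l e - gs_proj E vs l e) - c * u e)" if "dot E u u \<noteq> 0"
    using that by (simp add: r_def u_def[symmetric] c_def Let_def algebra_simps)
  have r_orth_vs: "\<forall>v'\<in>set vs. dot E r v' = 0"
  proof (cases "dot E u u = 0")
    case True
    then show ?thesis using IH r_degenerate by simp
  next
    case False
    show ?thesis
    proof
      fix v' assume v': "v' \<in> set vs"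
      have "dot E r v' = dot E (\<lambda>e. l e - gs_proj E vs l e) v' - c * dot E u v'"
        unfolding r_step[OF False] by (simp only: dot_diff_left dot_mult_left)
      then show "dot E r v' = 0" using IH u_orth v' by simp
    qed
  qed
  have r_orth_u: "dot E r u = 0"
  proof (cases "dot E u u = 0")
    case True
    then have "\<And>e. e \<in> E \<Longrightarrow> u e = 0" using dot_self_eq_0_imp[OF assms(1)] by blast
    then show ?thesis by (simp add: dot_def)
  next
    case False
    have "dot E (gs_proj E vs l) u = 0"
      using dot_gs_proj_eq_0[OF u_orth] dot_commute by metis
    moreover have "dot E r u = dot E l u - dot E (gs_proj E vs l) u - c * dot E u u"
      unfolding r_step[OF False] by (simp only: dot_diff_left dot_mult_left)
    ultimately show ?thesis using False by (simp add: c_def dot_commute[of E l u])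
  qed
  have "dot E r v = dot E r u + dot E r (gs_proj E vs v)"
    by (subst dot_add_right[symmetric]) (rule dot_cong, auto simp: u_def)
  also have "\<dots> = 0"
    using r_orth_u dot_gs_proj_eq_0[OF r_orth_vs] by simp
  finally show ?case
    using Cons.prems r_orth_vs by (auto simp: r_def)
qed

lemma gs_proj_linear:
  assumes "finite E"
  shows "gs_proj E vs l e = (\<Sum>j\<in>E. l j * gs_proj E vs (unit_vec j) e)"
proof (induction vs arbitrary: e)
  case Nil
  then show ?case by simp
next
  case (Cons v vs)
  define u where "u = (\<lambda>e. v e - gs_proj E vs v e)"
  show ?case
  proof (cases "dot E u u = 0")
    case True
    then show ?thesis using Cons by (simp add: u_def[symmetric] Let_def)
  next
    case False
    have "(\<Sum>j\<in>E. l j * gs_proj E (v # vs) (unit_vec j) e)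
        = (\<Sum>j\<in>E. l j * gs_proj E vs (unit_vec j) e + l j * u j * u e / dot E u u)"
      using False assms
      by (intro sum.cong) (auto simp: u_def[symmetric] Let_def dot_unit_vec_right distrib_left)
    also have "\<dots> = gs_proj E vs l e + (\<Sum>j\<in>E. l j * u j) * u e / dot E u u"
      using Cons by (simp add: sum.distrib sum_divide_distrib sum_distrib_right)
    also have "\<dots> = gs_proj E (v # vs) l e"
      using False by (simp add: u_def[symmetric] Let_def dot_def mult.commute)
    finally show ?thesis by simp
  qed
qed

text \<open>Each \<open>v\<^sub>r\<close> is detected by its own coordinate \<open>r\<close>, at which the others vanish, so the
  \<open>v\<^sub>r\<close> are independent and the trace of the projection is their number.\<close>
lemma sum_diag_gs_proj_unit_vec:
  assumes "finite E" "distinct (map fst rs)" "\<forall>(r, v)\<in>set rs. r \<in> E \<and> v r \<noteq> 0"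
    "\<forall>(r, v)\<in>set rs. \<forall>(r', v')\<in>set rs. r' \<noteq> r \<longrightarrow> v' r = 0"
  shows "(\<Sum>j\<in>E. gs_proj E (map snd rs) (unit_vec j) j) = real (length rs)"
  using assms(2-4)
proof (induction rs)
  case Nil
  then show ?case by simp
next
  case (Cons rv rs)
  obtain r v where rv: "rv = (r, v)" by fastforce
  define vs where "vs = map snd rs"
  define u where "u = (\<lambda>e. v e - gs_proj E vs v e)"
  have IH: "(\<Sum>j\<in>E. gs_proj E vs (unit_vec j) j) = real (length rs)"
    using Cons unfolding vs_def by fastforce
  have r: "r \<in> E" "v r \<noteq> 0" using Cons.prems rv by auto
  have "\<forall>v'\<in>set vs. dot E (unit_vec r) v' = 0"
  proof
    fix v' assume "v' \<in> set vs"
    then obtain r' where "(r', v') \<in> set rs" unfolding vs_def by auto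
    moreover from this have "r' \<noteq> r" using Cons.prems(1) rv by force
    ultimately have "v' r = 0" using Cons.prems(3) rv by fastforce
    then show "dot E (unit_vec r) v' = 0" using dot_unit_vec_left[OF assms(1) r(1)] by simp
  qed
  then have "gs_proj E vs v r = 0"
    using dot_gs_proj_eq_0 dot_unit_vec_left[OF assms(1) r(1)] by metis
  then have "u r \<noteq> 0" using r(2) by (simp add: u_def)
  then have nz: "dot E u u \<noteq> 0" using dot_self_eq_0_imp[OF assms(1) _ r(1)] by blast
  have "(\<Sum>j\<in>E. gs_proj E (v # vs) (unit_vec j) j)
      = (\<Sum>j\<in>E. gs_proj E vs (unit_vec j) j + u j * u j / dot E u u)"
    using nz assms(1)
    by (intro sum.cong) (auto simp: u_def[symmetric] Let_def dot_unit_vec_right)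
  also have "\<dots> = real (length rs) + dot E u u / dot E u u"
    using IH by (simp add: sum.distrib sum_divide_distrib[symmetric] dot_def)
  also have "\<dots> = real (length (rv # rs))" using nz by simp
  finally show ?case by (simp add: rv vs_def)
qed

lemma sum_sq_residual_gs_proj_unit_vec:
  assumes "finite E" "j \<in> E"
  shows "(\<Sum>i\<in>E. (unit_vec j i - gs_proj E vs (unit_vec j) i)\<^sup>2) = 1 - gs_proj E vs (unit_vec j) j"
proof -
  define x where "x = (\<lambda>i. unit_vec j i - gs_proj E vs (unit_vec j) i)"
  have orth: "dot E x (gs_proj E vs (unit_vec j)) = 0"
    using dot_gs_proj_eq_0 dot_residual_gs_proj_eq_0[OF assms(1)] unfolding x_def by blast
  have "(\<Sum>i\<in>E. (unit_vec j i - gs_proj E vs (unit_vec j) i)\<^sup>2) = dot E x x"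
    by (simp add: dot_def x_def power2_eq_square)
  also have "\<dots> = dot E x (unit_vec j) - dot E x (gs_proj E vs (unit_vec j))"
    by (subst (2) x_def) (simp only: dot_diff_right)
  also have "\<dots> = 1 - gs_proj E vs (unit_vec j) j"
    using orth dot_unit_vec_right[OF assms] by (simp add: x_def unit_vec_def)
  finally show ?thesis .
qed

lemma gs_proj_in_feasible:
  assumes "finite E" "set rs = R"
  shows "(\<lambda>e. if e \<in> E then gs_proj E (map C rs) lb e else 0) \<in> feasible E R C lb"
  unfolding feasible_def
proof safe
  fix r assume "r \<in> R"
  then have "dot E (\<lambda>e. lb e - gs_proj E (map C rs) lb e) (C r) = 0"
    using dot_residual_gs_proj_eq_0[OF assms(1)] assms(2) by simp
  then show "(\<Sum>e\<in>E. C r e * (if e \<in> E then gs_proj E (map C rs) lb e else 0)) = (\<Sum>e\<in>E. C r e * lb e)"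
    by (simp add: dot_diff_left dot_commute[of E _ "C r"]) (simp add: dot_def)
qed simp

text \<open>Pythagoras: every feasible vector differs from the projection by a vector orthogonal to
  all constraint rows, hence to the projection itself.\<close>
lemma feasible_sum_sq_eq:
  assumes "finite E" "set rs = R" "l \<in> feasible E R C lb"
  defines "p \<equiv> (\<lambda>e. if e \<in> E then gs_proj E (map C rs) lb e else 0)"
  shows "(\<Sum>e\<in>E. (l e)\<^sup>2) = (\<Sum>e\<in>E. (p e)\<^sup>2) + (\<Sum>e\<in>E. (l e - p e)\<^sup>2)"
proof -
  define d where "d = (\<lambda>e. l e - p e)"
  have p: "p \<in> feasible E R C lb" unfolding p_def by (rule gs_proj_in_feasible[OF assms(1,2)])
  have "\<forall>v\<in>set (map C rs). dot E d v = 0"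
  proof
    fix v assume "v \<in> set (map C rs)"
    then obtain r where r: "r \<in> R" "v = C r" using assms(2) by auto
    have "dot E (C r) l = dot E (C r) p"
      using assms(3) p r unfolding feasible_def dot_def by simp
    then show "dot E d v = 0" by (simp add: d_def r dot_diff_left dot_commute[of E _ "C r"])
  qed
  then have "dot E d (gs_proj E (map C rs) lb) = 0" by (rule dot_gs_proj_eq_0)
  then have "(\<Sum>e\<in>E. d e * p e) = 0" by (simp add: dot_def p_def)
  moreover have "(\<Sum>e\<in>E. (l e)\<^sup>2) = (\<Sum>e\<in>E. (p e)\<^sup>2 + 2 * (d e * p e) + (l e - p e)\<^sup>2)"
    by (rule sum.cong) (simp_all add: d_def power2_eq_square algebra_simps)
  ultimately show ?thesis by (simp add: sum.distrib sum_distrib_left[symmetric])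
qed

lemma relaxed_eq_gs_proj:
  assumes "finite E" "set rs = R"
  shows "relaxed E R C lb = (\<lambda>e. if e \<in> E then gs_proj E (map C rs) lb e else 0)"
    (is "_ = ?p")
  unfolding relaxed_def
proof (rule the_equality)
  have p: "?p \<in> feasible E R C lb" by (rule gs_proj_in_feasible[OF assms])
  have "(\<Sum>e\<in>E. (?p e)\<^sup>2) \<le> (\<Sum>e\<in>E. (l e)\<^sup>2)" if "l \<in> feasible E R C lb" for l
    using feasible_sum_sq_eq[OF assms that] sum_nonneg[of E "\<lambda>e. (l e - ?p e)\<^sup>2"] by simp
  with p show "?p \<in> feasible E R C lb \<and>
      (\<forall>l'\<in>feasible E R C lb. (\<Sum>e\<in>E. (?p e)\<^sup>2 / 2) \<le> (\<Sum>e\<in>E. (l' e)\<^sup>2 / 2))"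
    by (simp add: sum_divide_distrib[symmetric])
next
  fix l assume l: "l \<in> feasible E R C lb \<and>
      (\<forall>l'\<in>feasible E R C lb. (\<Sum>e\<in>E. (l e)\<^sup>2 / 2) \<le> (\<Sum>e\<in>E. (l' e)\<^sup>2 / 2))"
  then have "(\<Sum>e\<in>E. (l e)\<^sup>2 / 2) \<le> (\<Sum>e\<in>E. (?p e)\<^sup>2 / 2)"
    by (rule bspec[OF conjunct2 gs_proj_in_feasible[OF assms]])
  then have "(\<Sum>e\<in>E. (l e)\<^sup>2) \<le> (\<Sum>e\<in>E. (?p e)\<^sup>2)"
    by (simp only: sum_divide_distrib[symmetric])
  then have "(\<Sum>e\<in>E. (l e - ?p e)\<^sup>2) = 0"
    using feasible_sum_sq_eq[OF assms conjunct1[OF l]] sum_nonneg[of E "\<lambda>e. (l e - ?p e)\<^sup>2"] by simp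
  then have "\<forall>e\<in>E. l e = ?p e"
    using assms(1) by (subst (asm) sum_nonneg_eq_0_iff) auto
  moreover have "\<forall>e. e \<notin> E \<longrightarrow> l e = 0" using l by (simp add: feasible_def)
  ultimately show "l = ?p" by auto
qed

section \<open>Periodic functions of a uniform variable\<close>

abbreviation unif01 :: "real measure" where
  "unif01 \<equiv> uniform_measure lborel {0..<1}"

lemma prob_space_unif01: "prob_space unif01"
  by (rule prob_space_uniform_measure) auto

lemma integral_unif01:
  fixes f :: "real \<Rightarrow> real"
  assumes "f \<in> borel_measurable borel"
  shows "(\<integral>y. f y \<partial>unif01) = (\<integral>y. indicator {0..<1} y * f y \<partial>lborel)"
proof -
  have "unif01 = density lborel (\<lambda>x. ennreal (indicator {0..<1} x))"
    unfolding uniform_measure_def by (simp add: ennreal_indicator divide_ennreal_def)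
  then show ?thesis by (simp add: integral_density assms)
qed

lemma wrap_add_of_int: "wrap (t + of_int k) = wrap t"
proof -
  have "\<lfloor>t + of_int k + 1 / 2\<rfloor> = \<lfloor>t + 1/2\<rfloor> + k"
    by (metis add.commute add.left_commute floor_add_int)
  then show ?thesis by (simp add: wrap_def)
qed

lemma wrap_bounds: "- 1/2 \<le> wrap t" "wrap t < 1/2"
  unfolding wrap_def using floor_correct[of "t + 1/2"] by linarith+

lemma abs_wrap_le: "\<bar>wrap t\<bar> \<le> 1/2"
  using wrap_bounds[of t] by auto

lemma wrap_eq_self: "- 1/2 \<le> t \<Longrightarrow> t < 1/2 \<Longrightarrow> wrap t = t"
  unfolding wrap_def by (simp add: floor_eq_iff)

lemma borel_measurable_wrap[measurable]: "wrap \<in> borel_measurable borel"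
  unfolding wrap_def by measurable

lemma integral_lborel_shift: "(\<integral>x. g x \<partial>lborel) = (\<integral>y. g (c + y) \<partial>lborel)" for g :: "real \<Rightarrow> real"
  using lborel_integral_real_affine[of 1 g c] by simp

locale periodic_bounded =
  fixes F :: "real \<Rightarrow> real" and K :: real
  assumes measurable_F[measurable]: "F \<in> borel_measurable borel"
    and bounded: "\<And>t. \<bar>F t\<bar> \<le> K"
    and periodic: "\<And>t k. F (t + of_int k) = F t"
begin

lemma integrable_Ico: "integrable lborel (\<lambda>x. indicator {a..<b} x * F x)"
proof (rule Bochner_Integration.integrable_bound[OF _ _ AE_I2])
  show "integrable lborel (\<lambda>x. K * indicator {a..<b} x)"
    by (intro integrable_mult_right integrable_real_indicator emeasure_bounded_finite) auto
  show "norm (indicator {a..<b} x * F x) \<le> norm (K * indicator {a..<b} x)" for x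
    using bounded[of x] by (auto simp: indicator_def)
qed measurable

definition period_integral :: "real \<Rightarrow> real" where
  "period_integral a = (\<integral>x. indicator {a..<a+1} x * F x \<partial>lborel)"

lemma period_integral_eq: "period_integral a = (\<integral>y. indicator {0..<1} y * F (y + a) \<partial>lborel)"
  unfolding period_integral_def
  by (subst integral_lborel_shift[of _ a])
     (auto intro!: Bochner_Integration.integral_cong simp: indicator_def add.commute)

text \<open>Split \<open>[a, a+1)\<close> at the integer \<open>k + 1\<close> and move the upper piece down by one period.\<close>
lemma period_integral_const: "period_integral a = period_integral 0"
proof -
  define k where "k = real_of_int \<lfloor>a\<rfloor>"
  have k: "k \<le> a" "a < k + 1" unfolding k_def by linarith+
  have "period_integral a
      = (\<integral>x. indicator {a..<k+1} x * F x + indicator {k+1..<a+1} x * F x \<partial>lborel)"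
    unfolding period_integral_def using k
    by (intro Bochner_Integration.integral_cong) (auto simp: indicator_def)
  also have "\<dots> = (\<integral>x. indicator {a..<k+1} x * F x \<partial>lborel)
      + (\<integral>x. indicator {k+1..<a+1} x * F x \<partial>lborel)"
    by (intro Bochner_Integration.integral_add integrable_Ico)
  also have "(\<integral>x. indicator {k+1..<a+1} x * F x \<partial>lborel) = (\<integral>x. indicator {k..<a} x * F x \<partial>lborel)"
    using periodic[of _ 1] by (subst integral_lborel_shift[of _ 1])
      (auto intro!: Bochner_Integration.integral_cong simp: indicator_def add.commute)
  also have "(\<integral>x. indicator {a..<k+1} x * F x \<partial>lborel) + (\<integral>x. indicator {k..<a} x * F x \<partial>lborel)
      = (\<integral>x. indicator {a..<k+1} x * F x + indicator {k..<a} x * F x \<partial>lborel)"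
    by (intro Bochner_Integration.integral_add[symmetric] integrable_Ico)
  also have "\<dots> = period_integral k"
    unfolding period_integral_def using k
    by (intro Bochner_Integration.integral_cong) (auto simp: indicator_def)
  also have "\<dots> = period_integral 0"
    unfolding period_integral_eq using periodic[of _ "\<lfloor>a\<rfloor>"] by (simp add: k_def)
  finally show ?thesis .
qed

lemma integral_unif01_eq_period_integral: "(\<integral>y. F (y + c) \<partial>unif01) = period_integral c"
  by (simp add: integral_unif01 period_integral_eq)

lemma integral_unif01_translate: "(\<integral>y. F (y + c) \<partial>unif01) = (\<integral>y. F y \<partial>unif01)"
  using integral_unif01_eq_period_integral[of c] integral_unif01_eq_period_integral[of 0]
  by (simp add: period_integral_const[of c])

lemma integral_unif01_reflect: "(\<integral>y. F (c - y) \<partial>unif01) = (\<integral>y. F y \<partial>unif01)"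
proof -
  have "(\<integral>y. F (c - y) \<partial>unif01) = (\<integral>y. indicator {0..<1} y * F (c - y) \<partial>lborel)"
    by (simp add: integral_unif01)
  also have "\<dots> = (\<integral>x. indicator {c-1<..c} x * F x \<partial>lborel)"
    using lborel_integral_real_affine[of "-1" "\<lambda>x. indicator {c-1<..c} x * F x" c]
    by (auto intro!: Bochner_Integration.integral_cong simp: indicator_def)
  also have "\<dots> = period_integral (c - 1)"
    unfolding period_integral_def
    using AE_lborel_singleton[of "c-1"] AE_lborel_singleton[of c]
    by (intro integral_cong_AE) (auto elim!: eventually_elim2 simp: indicator_def)
  also have "\<dots> = (\<integral>y. F y \<partial>unif01)"
    using integral_unif01_eq_period_integral[of 0] by (simp add: period_integral_const[of "c - 1"])
  finally show ?thesis .
qed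

lemma integral_unif01_centered: "(\<integral>y. F y \<partial>unif01) = (\<integral>x. indicator {-1/2..<1/2} x * F x \<partial>lborel)"
  using integral_unif01_eq_period_integral[of 0] period_integral_const[of "-1/2"]
  by (simp add: period_integral_def)

end

lemma periodic_bounded_wrap:
  fixes h :: "real \<Rightarrow> real"
  assumes "h \<in> borel_measurable borel" and "\<And>u. \<bar>u\<bar> \<le> 1/2 \<Longrightarrow> \<bar>h u\<bar> \<le> K"
  shows "periodic_bounded (\<lambda>t. h (wrap t)) K"
  using assms abs_wrap_le by unfold_locales (auto simp: wrap_add_of_int)

lemma integral_unif01_wrap_translate:
  fixes h :: "real \<Rightarrow> real"
  assumes "h \<in> borel_measurable borel" and "\<And>u. \<bar>u\<bar> \<le> 1/2 \<Longrightarrow> \<bar>h u\<bar> \<le> K"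
  shows "(\<integral>y. h (wrap (y + t)) \<partial>unif01) = (\<integral>y. h (wrap y) \<partial>unif01)"
proof -
  interpret periodic_bounded "\<lambda>t. h (wrap t)" K by (rule periodic_bounded_wrap[OF assms])
  show ?thesis by (rule integral_unif01_translate)
qed

lemma integral_unif01_wrap_reflect:
  fixes h :: "real \<Rightarrow> real"
  assumes "h \<in> borel_measurable borel" and "\<And>u. \<bar>u\<bar> \<le> 1/2 \<Longrightarrow> \<bar>h u\<bar> \<le> K"
  shows "(\<integral>y. h (wrap (t - y)) \<partial>unif01) = (\<integral>y. h (wrap y) \<partial>unif01)"
proof -
  interpret periodic_bounded "\<lambda>t. h (wrap t)" K by (rule periodic_bounded_wrap[OF assms])
  show ?thesis by (rule integral_unif01_reflect)
qed

lemma integral_unif01_wrap: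
  fixes h :: "real \<Rightarrow> real"
  assumes [measurable]: "h \<in> borel_measurable borel" and "\<And>u. \<bar>u\<bar> \<le> 1/2 \<Longrightarrow> \<bar>h u\<bar> \<le> K"
  shows "(\<integral>y. h (wrap y) \<partial>unif01) = (\<integral>x. indicator {-1/2..1/2} x * h x \<partial>lborel)"
proof -
  interpret periodic_bounded "\<lambda>t. h (wrap t)" K by (rule periodic_bounded_wrap[OF assms])
  have "AE x in lborel. indicator {-1/2..<1/2} x * h (wrap x) = indicator {-1/2..1/2} x * h x"
    using AE_lborel_singleton[of "1/2"] by eventually_elim (auto simp: indicator_def wrap_eq_self)
  then show ?thesis
    unfolding integral_unif01_centered by (intro integral_cong_AE) auto
qed

lemma integral_unif01_wrap_eq_0: "(\<integral>y. wrap y \<partial>unif01) = 0"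
proof -
  have "(\<integral>y. wrap y \<partial>unif01) = (\<integral>x. indicator {-1/2..1/2} x *\<^sub>R x \<partial>lborel)"
    using integral_unif01_wrap[of "\<lambda>u. u" "1/2"] by simp
  also have "\<dots> = (1/2)\<^sup>2 / 2 - (-1/2)\<^sup>2 / 2"
    by (rule integral_FTC_atLeastAtMost[where F="\<lambda>x. x\<^sup>2 / 2"])
      (auto intro!: derivative_eq_intros continuous_intros
        simp: has_real_derivative_iff_has_vector_derivative[symmetric])
  finally show ?thesis by simp
qed

lemma integral_unif01_wrap_shift_eq_0:
  "(\<integral>y. wrap (y - t) \<partial>unif01) = 0" "(\<integral>y. wrap (t - y) \<partial>unif01) = 0"
  using integral_unif01_wrap_translate[of "\<lambda>u. u" "1/2" "- t"] integral_unif01_wrap_reflect[of "\<lambda>u. u" "1/2"]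
  by (simp_all add: integral_unif01_wrap_eq_0)

lemma integral_unif01_wrap_sq: "(\<integral>y. (wrap y)\<^sup>2 \<partial>unif01) = 1/12"
proof -
  have "(\<integral>y. (wrap y)\<^sup>2 \<partial>unif01) = (\<integral>x. indicator {-1/2..1/2} x *\<^sub>R x\<^sup>2 \<partial>lborel)"
    by (subst integral_unif01_wrap[where K=1]) (auto simp: abs_square_le_1)
  also have "\<dots> = (1/2) ^ 3 / 3 - (-1/2) ^ 3 / 3"
    by (rule integral_FTC_atLeastAtMost[where F="\<lambda>x. x ^ 3 / 3"])
      (auto intro!: derivative_eq_intros continuous_intros
        simp: has_real_derivative_iff_has_vector_derivative[symmetric])
  finally show ?thesis by (simp add: power3_eq_cube)
qed

section \<open>Correlations of the initial lengths\<close>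

definition node_pairs :: "nat \<Rightarrow> edge set" where
  "node_pairs N = {(a, b). a < b \<and> b < N}"

definition wrap_moment :: "(real \<Rightarrow> real) \<Rightarrow> real" where
  "wrap_moment g = (\<integral>y. wrap y * g (wrap y) \<partial>unif01)"

lemma prob_space_PiM_unif01: "prob_space (PiM I (\<lambda>_. unif01))"
  by (intro prob_space_PiM prob_space_unif01)

lemma prob_space_posM: "prob_space (posM N)"
  unfolding posM_def by (rule prob_space_PiM_unif01)

lemma measurable_slen[measurable]: "(\<lambda>x. slen x j) \<in> borel_measurable (posM N)"
proof -
  have "(\<lambda>x. x a) \<in> borel_measurable (posM N)" for a
  proof (cases "a < N")
    case True
    then show ?thesis unfolding posM_def
      by (auto intro!: measurable_component_singleton[where M="\<lambda>_. unif01", simplified])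
  next
    case False
    \<comment> \<open>Off the index set \<open>{..<N}\<close> every point of \<open>PiM\<close> is \<open>undefined\<close>.\<close>
    then have "(\<lambda>x. x a) \<in> borel_measurable (posM N) \<longleftrightarrow> (\<lambda>x. undefined :: real) \<in> borel_measurable (posM N)"
      by (intro measurable_cong) (auto simp: posM_def space_PiM PiE_def extensional_def)
    then show ?thesis by simp
  qed
  then show ?thesis unfolding slen_def by measurable
qed

lemma integral_posM_node:
  fixes f :: "(nat \<Rightarrow> real) \<Rightarrow> real"
  assumes "w < N" "integrable (posM N) f"
  shows "(\<integral>x. f x \<partial>posM N) = (\<integral>x. (\<integral>y. f (x(w:=y)) \<partial>unif01) \<partial>PiM ({..<N} - {w}) (\<lambda>_. unif01))"
proof -
  interpret product_prob_space "\<lambda>_::nat. unif01" by (intro product_prob_spaceI prob_space_unif01)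
  have "insert w ({..<N} - {w}) = {..<N}" using assms(1) by auto
  then show ?thesis
    using product_integral_insert[of "{..<N} - {w}" w f] assms(2) by (simp add: posM_def)
qed

lemma integrable_slen_mult:
  fixes g :: "real \<Rightarrow> real"
  assumes [measurable]: "g \<in> borel_measurable borel" and g: "\<And>u. \<bar>u\<bar> \<le> 1/2 \<Longrightarrow> \<bar>g u\<bar> \<le> K"
  shows "integrable (posM N) (\<lambda>x. slen x j * g (slen x k))"
proof -
  interpret prob_space "posM N" by (rule prob_space_posM)
  have "\<bar>slen x j * g (slen x k)\<bar> \<le> 1/2 * K" for x
    unfolding abs_mult slen_def using abs_wrap_le g[OF abs_wrap_le] by (intro mult_mono) auto
  then show ?thesis by (intro integrable_const_bound[where B="1/2 * K"]) auto
qed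

text \<open>For \<open>j \<noteq> k\<close> one endpoint of \<open>j\<close> is not an endpoint of \<open>k\<close>; integrating over its position
  makes \<open>slen x j\<close> uniform on the circle, independently of \<open>slen x k\<close>.\<close>
lemma integral_slen_mult:
  fixes g :: "real \<Rightarrow> real"
  assumes "j \<in> node_pairs N" "k \<in> node_pairs N"
    and [measurable]: "g \<in> borel_measurable borel" and g: "\<And>u. \<bar>u\<bar> \<le> 1/2 \<Longrightarrow> \<bar>g u\<bar> \<le> K"
  shows "(\<integral>x. slen x j * g (slen x k) \<partial>posM N) = (if j = k then wrap_moment g else 0)"
proof -
  have int: "integrable (posM N) (\<lambda>x. slen x j * g (slen x k))"
    by (rule integrable_slen_mult[OF assms(3) g])
  obtain a b where j: "j = (a, b)" "a < b" "b < N" using assms(1) by (auto simp: node_pairs_def)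
  obtain c d where k: "k = (c, d)" "c < d" "d < N" using assms(2) by (auto simp: node_pairs_def)
  consider "j = k" | "b \<notin> {c, d}" | "a \<notin> {c, d}"
    using j k by fastforce
  then show ?thesis
  proof cases
    case 1
    have "(\<integral>y. slen (x(b:=y)) j * g (slen (x(b:=y)) k) \<partial>unif01) = wrap_moment g" for x
    proof -
      have "\<bar>u * g u\<bar> \<le> 1/2 * K" if "\<bar>u\<bar> \<le> 1/2" for u
        using that g[OF that] unfolding abs_mult by (intro mult_mono) auto
      then show ?thesis
        using 1 j k integral_unif01_wrap_translate[of "\<lambda>u. u * g u" "1/2 * K" "- x a"]
        by (simp add: slen_def wrap_moment_def less_imp_neq)
    qed
    then show ?thesis
      using 1 integral_posM_node[OF j(3) int]
        prob_space.prob_space[OF prob_space_PiM_unif01[of "{..<N} - {b}"]]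
      by simp
  next
    case 2
    have "(\<integral>y. slen (x(b:=y)) j * g (slen (x(b:=y)) k) \<partial>unif01)
        = (\<integral>y. wrap (y - x a) \<partial>unif01) * g (slen x k)" for x
      using 2 j(2) by (simp add: slen_def j k less_imp_neq)
    then show ?thesis
      using 2 j k integral_posM_node[OF j(3) int] integral_unif01_wrap_shift_eq_0 by auto
  next
    case 3
    have "(\<integral>y. slen (x(a:=y)) j * g (slen (x(a:=y)) k) \<partial>unif01)
        = (\<integral>y. wrap (x b - y) \<partial>unif01) * g (slen x k)" for x
      using 3 j(2) by (simp add: slen_def j k less_imp_neq[symmetric])
    moreover have "a < N" using j by simp
    ultimately show ?thesis
      using 3 j k integral_posM_node[OF \<open>a < N\<close> int] integral_unif01_wrap_shift_eq_0 by auto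
  qed
qed

lemma wrap_moment_const_1: "wrap_moment (\<lambda>_. 1) = 0"
  using integral_unif01_wrap_eq_0 by (simp add: wrap_moment_def)

lemma wrap_moment_id: "wrap_moment (\<lambda>u. u) = 1/12"
  using integral_unif01_wrap_sq by (simp add: wrap_moment_def power2_eq_square)

lemma integral_slen_mult_self:
  fixes g :: "real \<Rightarrow> real"
  assumes "i \<in> node_pairs N" and "g \<in> borel_measurable borel" and "\<And>u. \<bar>u\<bar> \<le> 1/2 \<Longrightarrow> \<bar>g u\<bar> \<le> K"
  shows "(\<integral>x. slen x i * g (slen x i) \<partial>posM N) = wrap_moment g"
  using integral_slen_mult[OF assms(1,1,2,3)] by simp

lemma integral_slen: "i \<in> node_pairs N \<Longrightarrow> (\<integral>x. slen x i \<partial>posM N) = 0"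
  using integral_slen_mult_self[of i N "\<lambda>_. 1" 1] wrap_moment_const_1 by simp

lemma integral_slen_sq: "i \<in> node_pairs N \<Longrightarrow> (\<integral>x. (slen x i)\<^sup>2 \<partial>posM N) = 1/12"
  using integral_slen_mult_self[of i N "\<lambda>u. u" "1/2"] wrap_moment_id by (simp add: power2_eq_square)

lemma integral_sum_slen_mult:
  fixes g :: "real \<Rightarrow> real"
  assumes "finite E" "E \<subseteq> node_pairs N" "k \<in> node_pairs N"
    and [measurable]: "g \<in> borel_measurable borel" and g: "\<And>u. \<bar>u\<bar> \<le> 1/2 \<Longrightarrow> \<bar>g u\<bar> \<le> K"
  shows "integrable (posM N) (\<lambda>x. (\<Sum>j\<in>E. c j * slen x j) * g (slen x k))"
    and "(\<integral>x. (\<Sum>j\<in>E. c j * slen x j) * g (slen x k) \<partial>posM N) = (if k \<in> E then c k * wrap_moment g else 0)"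
proof -
  have expand: "(\<lambda>x. (\<Sum>j\<in>E. c j * slen x j) * g (slen x k)) = (\<lambda>x. \<Sum>j\<in>E. c j * (slen x j * g (slen x k)))"
    by (simp add: sum_distrib_right mult.assoc)
  have int: "integrable (posM N) (\<lambda>x. slen x j * g (slen x k))" for j
    by (rule integrable_slen_mult[OF _ g]) simp
  then show "integrable (posM N) (\<lambda>x. (\<Sum>j\<in>E. c j * slen x j) * g (slen x k))"
    unfolding expand by auto
  have "(\<integral>x. (\<Sum>j\<in>E. c j * slen x j) * g (slen x k) \<partial>posM N)
      = (\<Sum>j\<in>E. c j * (if j = k then wrap_moment g else 0))"
    unfolding expand using int assms(2) integral_slen_mult[OF _ assms(3-4) g]
    by (auto intro!: sum.cong)
  also have "\<dots> = (if k \<in> E then c k * wrap_moment g else 0)"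
    using assms(1) by (simp add: if_distrib[where f="\<lambda>a. _ * a"] cong: if_cong)
  finally show "(\<integral>x. (\<Sum>j\<in>E. c j * slen x j) * g (slen x k) \<partial>posM N) = (if k \<in> E then c k * wrap_moment g else 0)" .
qed

lemma integral_sum_slen:
  assumes "finite E" "E \<subseteq> node_pairs N"
  shows "(\<integral>x. (\<Sum>j\<in>E. c j * slen x j) \<partial>posM N) = 0"
proof -
  have "integrable (posM N) (\<lambda>x. slen x j)" for j
    using integrable_slen_mult[of "\<lambda>_. 1" 1 N j j] by simp
  then show ?thesis using assms(2) by (auto simp: integral_slen intro!: sum.neutral)
qed

lemma integral_sum_slen_sq:
  assumes "finite E" "E \<subseteq> node_pairs N"
  shows "(\<integral>x. (\<Sum>j\<in>E. c j * slen x j)\<^sup>2 \<partial>posM N) = (\<Sum>j\<in>E. (c j)\<^sup>2) / 12"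
proof -
  have "k \<in> E \<Longrightarrow> integrable (posM N) (\<lambda>x. (\<Sum>j\<in>E. c j * slen x j) * slen x k)"
    and "k \<in> E \<Longrightarrow> (\<integral>x. (\<Sum>j\<in>E. c j * slen x j) * slen x k \<partial>posM N) = c k * wrap_moment (\<lambda>u. u)"
    for k
    using integral_sum_slen_mult[OF assms, where g="\<lambda>u. u" and K="1/2" and k=k] assms(2) by auto
  note lin = this
  have "(\<integral>x. (\<Sum>j\<in>E. c j * slen x j)\<^sup>2 \<partial>posM N)
      = (\<integral>x. (\<Sum>k\<in>E. c k * ((\<Sum>j\<in>E. c j * slen x j) * slen x k)) \<partial>posM N)"
    by (simp add: power2_eq_square sum_distrib_left sum_distrib_right mult_ac)
  also have "\<dots> = (\<Sum>k\<in>E. c k * (c k * wrap_moment (\<lambda>u. u)))"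
    using assms(2) lin by (auto intro!: sum.cong)
  finally show ?thesis by (simp add: wrap_moment_id power2_eq_square sum_divide_distrib)
qed

section \<open>The response matrix\<close>

definition row_list :: "'a set \<Rightarrow> 'a list" where
  "row_list R = (SOME rs. set rs = R \<and> distinct rs)"

lemma row_list: "finite R \<Longrightarrow> set (row_list R) = R \<and> distinct (row_list R)"
  unfolding row_list_def by (rule someI_ex) (rule finite_distinct_list)

text \<open>The paper's \<open>C\<^sup>T(CC\<^sup>T)\<^sup>-\<^sup>1C\<close> and \<open>S\<close>, as matrices indexed by springs.\<close>
definition proj_matrix :: "edge set \<Rightarrow> edge set \<Rightarrow> (edge \<Rightarrow> edge \<Rightarrow> real) \<Rightarrow> edge \<Rightarrow> edge \<Rightarrow> real" where
  "proj_matrix E R C i j = gs_proj E (map C (row_list R)) (unit_vec j) i"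

definition response_matrix :: "edge set \<Rightarrow> edge set \<Rightarrow> (edge \<Rightarrow> edge \<Rightarrow> real) \<Rightarrow> edge \<Rightarrow> edge \<Rightarrow> real" where
  "response_matrix E R C i j = proj_matrix E R C i j - unit_vec j i"

lemma dl_eq_sum_proj_matrix:
  assumes "finite E" "finite R"
  shows "dl E R C i x = (\<Sum>j\<in>E. (if i \<in> E then proj_matrix E R C i j else 0) * slen x j) - slen x i"
  using relaxed_eq_gs_proj[OF assms(1) conjunct1[OF row_list[OF assms(2)]]]
    gs_proj_linear[OF assms(1), of "map C (row_list R)" "slen x" i]
  by (auto simp: dl_def proj_matrix_def mult.commute)

lemma dl_eq_sum_response_matrix:
  assumes "finite E" "finite R" "i \<in> E"
  shows "dl E R C i x = (\<Sum>j\<in>E. response_matrix E R C i j * slen x j)"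
proof -
  have "slen x i = (\<Sum>j\<in>E. unit_vec j i * slen x j)"
    using assms by (simp add: unit_vec_def if_distrib[where f="\<lambda>a. a * _"] cong: if_cong)
  then show ?thesis using dl_eq_sum_proj_matrix[OF assms(1,2)] assms(3)
    by (simp add: response_matrix_def left_diff_distrib sum_subtractf)
qed

text \<open>For an infinite spring set every sum in the constraints is \<open>0\<close>, so \<open>relaxed\<close> no longer
  depends on the initial lengths.\<close>
lemma dl_eq_if_finite:
  assumes "finite E \<longrightarrow> finite R"
  shows "dl E R C i x = (if finite E then (\<Sum>j\<in>E. (if i \<in> E then proj_matrix E R C i j else 0) * slen x j)
    else relaxed E R C (\<lambda>_. 0) i) - slen x i"
proof (cases "finite E")
  case True
  then show ?thesis using dl_eq_sum_proj_matrix assms by simp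
next
  case False
  then have "feasible E R C (slen x) = feasible E R C (\<lambda>_. 0)"
    by (simp add: feasible_def)
  then show ?thesis using False by (simp add: dl_def relaxed_def)
qed

lemma sum_sq_response_matrix:
  assumes "finite E"
  shows "(\<Sum>i\<in>E. \<Sum>j\<in>E. (response_matrix E R C i j)\<^sup>2) = real (card E) - (\<Sum>j\<in>E. proj_matrix E R C j j)"
proof -
  have "(\<Sum>i\<in>E. \<Sum>j\<in>E. (response_matrix E R C i j)\<^sup>2)
      = (\<Sum>j\<in>E. \<Sum>i\<in>E. (unit_vec j i - proj_matrix E R C i j)\<^sup>2)"
    by (subst sum.swap) (simp add: response_matrix_def power2_commute)
  also have "\<dots> = (\<Sum>j\<in>E. 1 - proj_matrix E R C j j)"
    by (intro sum.cong refl) (simp add: proj_matrix_def sum_sq_residual_gs_proj_unit_vec[OF assms])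
  finally show ?thesis by (simp add: sum_subtractf)
qed

lemma abs_response_matrix_le_1:
  assumes "finite E" "i \<in> E" "j \<in> E"
  shows "\<bar>response_matrix E R C i j\<bar> \<le> 1"
proof -
  define y where "y = gs_proj E (map C (row_list R)) (unit_vec j)"
  have "dot E (\<lambda>e. unit_vec j e - y e) y = 0"
    unfolding y_def using dot_gs_proj_eq_0 dot_residual_gs_proj_eq_0[OF assms(1)] by blast
  then have "y j = dot E y y"
    using dot_unit_vec_left[OF assms(1,3), of y] by (simp add: dot_diff_left dot_commute)
  then have "y j \<ge> 0" using dot_self_nonneg by simp
  moreover have "(unit_vec j i - y i)\<^sup>2 \<le> (\<Sum>i\<in>E. (unit_vec j i - y i)\<^sup>2)"
    by (rule member_le_sum) (use assms in auto)
  ultimately have "(unit_vec j i - y i)\<^sup>2 \<le> 1"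
    unfolding y_def sum_sq_residual_gs_proj_unit_vec[OF assms(1,3)] by simp
  then show ?thesis
    by (simp add: response_matrix_def proj_matrix_def y_def abs_minus_commute abs_square_le_1)
qed

lemma abs_dl_le:
  assumes "finite E" "finite R"
  shows "\<bar>dl E R C i x\<bar> \<le> real (card E) / 2 + 1/2"
proof (cases "i \<in> E")
  case True
  have "\<bar>dl E R C i x\<bar> \<le> (\<Sum>j\<in>E. \<bar>response_matrix E R C i j\<bar> * \<bar>slen x j\<bar>)"
    unfolding dl_eq_sum_response_matrix[OF assms True] abs_mult[symmetric] by (rule sum_abs)
  also have "\<dots> \<le> (\<Sum>j\<in>E. 1 * (1/2))"
    using abs_response_matrix_le_1[OF assms(1) True] abs_wrap_le
    by (intro sum_mono mult_mono) (auto simp: slen_def)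
  finally show ?thesis by simp
next
  case False
  then show ?thesis
    using dl_eq_sum_proj_matrix[OF assms, of C i x] abs_wrap_le[of "x (snd i) - x (fst i)"]
    by (simp add: slen_def)
qed

lemma sum_diag_proj_matrix:
  assumes "finite E" "R \<subseteq> E" "\<And>r. r \<in> R \<Longrightarrow> C r r \<noteq> 0"
    "\<And>r r'. r \<in> R \<Longrightarrow> r' \<in> R \<Longrightarrow> r \<noteq> r' \<Longrightarrow> C r' r = 0"
  shows "(\<Sum>j\<in>E. proj_matrix E R C j j) = real (card R)"
proof -
  have R: "set (row_list R) = R" "distinct (row_list R)"
    using row_list finite_subset[OF assms(2,1)] by blast+
  define rs where "rs = map (\<lambda>r. (r, C r)) (row_list R)"
  have "(\<Sum>j\<in>E. gs_proj E (map snd rs) (unit_vec j) j) = real (length rs)"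
    using R assms by (intro sum_diag_gs_proj_unit_vec) (auto simp: rs_def comp_def)
  moreover have "map snd rs = map C (row_list R)" by (simp add: rs_def comp_def)
  moreover have "length rs = card R" using R distinct_card by (fastforce simp: rs_def)
  ultimately show ?thesis by (simp add: proj_matrix_def)
qed

section \<open>Averages over the ensemble\<close>

lemma pair_prob_space_pmf_posM: "pair_prob_space (measure_pmf p) (posM N)"
  by (simp add: pair_prob_space_def pair_sigma_finite_def prob_space_imp_sigma_finite
      prob_space_measure_pmf prob_space_posM)

lemma prob_space_ens: "prob_space (ens N G)"
  unfolding ens_def by (intro prob_space_pair prob_space_measure_pmf prob_space_posM)

lemma abs_integral_le_bound:
  fixes f :: "'a \<Rightarrow> real"
  assumes "prob_space M" "f \<in> borel_measurable M" "\<And>x. x \<in> space M \<Longrightarrow> \<bar>f x\<bar> \<le> B"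
  shows "\<bar>\<integral>x. f x \<partial>M\<bar> \<le> B"
proof -
  interpret prob_space M by fact
  have int: "integrable M f" by (rule integrable_const_bound[where B=B]) (use assms in auto)
  have "\<bar>\<integral>x. f x \<partial>M\<bar> \<le> (\<integral>x. \<bar>f x\<bar> \<partial>M)" by (rule integral_abs_bound)
  also have "\<dots> \<le> (\<integral>x. B \<partial>M)" by (rule integral_mono) (use int assms in auto)
  finally show ?thesis using prob_space by simp
qed

lemma integral_cond_ens:
  fixes \<phi> :: "edge \<times> (nat \<Rightarrow> real) \<Rightarrow> real"
  assumes "finite E" "E \<noteq> {}" "\<phi> \<in> borel_measurable (cond_ens N E)" "\<And>\<omega>. \<bar>\<phi> \<omega>\<bar> \<le> B"
  shows "(\<integral>\<omega>. \<phi> \<omega> \<partial>cond_ens N E) = (\<Sum>i\<in>E. \<integral>x. \<phi> (i, x) \<partial>posM N) / card E"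
proof -
  interpret P: pair_prob_space "measure_pmf (pmf_of_set E)" "posM N"
    by (rule pair_prob_space_pmf_posM)
  have "integrable (cond_ens N E) \<phi>"
    using assms(3,4) unfolding cond_ens_def by (intro P.integrable_const_bound[where B=B]) auto
  then have "(\<integral>\<omega>. \<phi> \<omega> \<partial>cond_ens N E) = (\<integral>i. (\<integral>x. \<phi> (i, x) \<partial>posM N) \<partial>pmf_of_set E)"
    unfolding cond_ens_def by (intro P.integral_fst'[symmetric])
  also have "\<dots> = (\<Sum>i\<in>E. \<integral>x. \<phi> (i, x) \<partial>posM N) / card E"
    by (rule integral_pmf_of_set[OF assms(2,1)])
  finally show ?thesis .
qed

lemma integral_graph_spring:
  fixes h :: "edge set \<times> edge \<Rightarrow> real"
  assumes bounded: "\<And>E i. E \<in> set_pmf G \<Longrightarrow> \<bar>h (E, i)\<bar> \<le> B"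
    and average: "\<And>E. E \<in> set_pmf G \<Longrightarrow> finite E \<and> E \<noteq> {} \<and> (\<Sum>i\<in>E. h (E, i)) / card E = c"
  shows "(\<integral>\<omega>. h \<omega> \<partial>graph_spring G) = c"
proof -
  define h' where "h' = (\<lambda>\<omega>. if fst \<omega> \<in> set_pmf G then h \<omega> else 0)"
  obtain E0 where "E0 \<in> set_pmf G" using set_pmf_not_empty[of G] by auto
  then have "0 \<le> B" using bounded[of E0 undefined] by linarith
  then have B: "\<bar>h' \<omega>\<bar> \<le> B" for \<omega>
    using bounded[of "fst \<omega>" "snd \<omega>"] by (simp add: h'_def)
  have "(\<integral>\<omega>. h \<omega> \<partial>graph_spring G) = (\<integral>\<omega>. h' \<omega> \<partial>graph_spring G)"
    by (intro integral_cong_AE) (auto simp: AE_measure_pmf_iff graph_spring_def h'_def)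
  also have "\<dots> = (\<integral>E. (\<integral>\<omega>. h' \<omega> \<partial>map_pmf (\<lambda>i. (E, i)) (pmf_of_set E)) \<partial>G)"
    unfolding graph_spring_def measure_pmf_bind
    using B measure_pmf.finite_measure
    by (intro integral_bind[where K="count_space UNIV" and B=B and B'=1])
      (auto simp: space_subprob_algebra prob_space_measure_pmf prob_space_imp_subprob_space
        measure_pmf.emeasure_space_1)
  also have "\<dots> = (\<integral>E. c \<partial>G)"
  proof (intro integral_cong_AE)
    show "AE E in G. (\<integral>\<omega>. h' \<omega> \<partial>map_pmf (\<lambda>i. (E, i)) (pmf_of_set E)) = c"
      unfolding AE_measure_pmf_iff using average by (simp add: integral_pmf_of_set h'_def)
  qed simp_all
  finally show ?thesis by (simp add: measure_pmf.prob_space)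
qed

lemma AE_ens_support: "AE \<omega> in ens N G. fst (fst \<omega>) \<in> set_pmf G"
proof -
  interpret P: pair_prob_space "measure_pmf (graph_spring G)" "posM N"
    by (rule pair_prob_space_pmf_posM)
  have "Measurable.pred (measure_pmf (graph_spring G) \<Otimes>\<^sub>M posM N) (\<lambda>\<omega>. fst (fst \<omega>) \<in> set_pmf G)"
    by (rule measurable_compose[OF measurable_fst]) simp
  then show ?thesis
    unfolding ens_def
  proof (rule P.AE_pair_measure[OF predE])
    show "AE \<omega> in graph_spring G. AE x in posM N. fst (fst (\<omega>, x)) \<in> set_pmf G"
      by (auto simp: AE_measure_pmf_iff graph_spring_def)
  qed
qed

lemma integral_ens:
  fixes \<phi> :: "(edge set \<times> edge) \<times> (nat \<Rightarrow> real) \<Rightarrow> real"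
  assumes measurable: "\<phi> \<in> borel_measurable (ens N G)"
    and bounded: "\<And>E i x. E \<in> set_pmf G \<Longrightarrow> \<bar>\<phi> ((E, i), x)\<bar> \<le> B"
    and average: "\<And>E. E \<in> set_pmf G \<Longrightarrow>
      finite E \<and> E \<noteq> {} \<and> (\<Sum>i\<in>E. \<integral>x. \<phi> ((E, i), x) \<partial>posM N) / card E = c"
  shows "integrable (ens N G) \<phi>" "(\<integral>\<omega>. \<phi> \<omega> \<partial>ens N G) = c"
proof -
  interpret P: pair_prob_space "measure_pmf (graph_spring G)" "posM N"
    by (rule pair_prob_space_pmf_posM)
  have "AE \<omega> in ens N G. norm (\<phi> \<omega>) \<le> B"
    using AE_ens_support by eventually_elim (use bounded in \<open>auto simp: prod.split_sel\<close>)
  then show int: "integrable (ens N G) \<phi>"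
    using measurable unfolding ens_def by (intro P.integrable_const_bound[where B=B]) auto
  have "(\<integral>\<omega>. \<phi> \<omega> \<partial>ens N G) = (\<integral>\<omega>. (\<integral>x. \<phi> (\<omega>, x) \<partial>posM N) \<partial>graph_spring G)"
    using int unfolding ens_def by (intro P.integral_fst'[symmetric])
  also have "\<dots> = c"
  proof (rule integral_graph_spring)
    fix E i assume E: "E \<in> set_pmf G"
    have "(\<lambda>x. \<phi> ((E, i), x)) \<in> borel_measurable (posM N)"
      using measurable unfolding ens_def by (rule measurable_Pair2) simp
    then show "\<bar>\<integral>x. \<phi> ((E, i), x) \<partial>posM N\<bar> \<le> B"
      using bounded[OF E] by (intro abs_integral_le_bound[OF prob_space_posM])
  qed (rule average)
  finally show "(\<integral>\<omega>. \<phi> \<omega> \<partial>ens N G) = c" .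
qed

lemma measurable_pmf_fst:
  "space K = UNIV \<Longrightarrow> (\<lambda>\<omega>. h (fst \<omega>)) \<in> measurable (measure_pmf p \<Otimes>\<^sub>M M) K"
  by (rule measurable_compose[OF measurable_fst]) simp

lemma measurable_pmf_slen_index:
  fixes idx :: "'b \<Rightarrow> edge"
  shows "(\<lambda>\<omega>. slen (snd \<omega>) (idx (fst \<omega>))) \<in> borel_measurable (measure_pmf p \<Otimes>\<^sub>M posM N)"
  by (rule measurable_compose_countable[where f="\<lambda>j \<omega>. slen (snd \<omega>) j"])
    (auto intro: measurable_compose[OF measurable_snd measurable_slen] measurable_pmf_fst)

text \<open>A finite sum is a sum over a list, and only countably many lists of springs exist.\<close>
lemma measurable_pmf_sum_slen:
  fixes a :: "'b \<Rightarrow> edge \<Rightarrow> real" and S :: "'b \<Rightarrow> edge set"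
  shows "(\<lambda>\<omega>. \<Sum>j\<in>S (fst \<omega>). a (fst \<omega>) j * slen (snd \<omega>) j) \<in> borel_measurable (measure_pmf p \<Otimes>\<^sub>M posM N)"
proof -
  define rows where "rows = (\<lambda>b. if finite (S b) then row_list (S b) else [])"
  have "(\<Sum>j\<in>S b. a b j * slen x j) = (\<Sum>j\<in>set (rows b). a b j * slen x j)" for b x
    by (cases "finite (S b)") (simp_all add: rows_def row_list)
  moreover have "(\<lambda>\<omega>. \<Sum>j\<in>set (rows (fst \<omega>)). a (fst \<omega>) j * slen (snd \<omega>) j)
      \<in> borel_measurable (measure_pmf p \<Otimes>\<^sub>M posM N)"
    by (rule measurable_compose_countable[where f="\<lambda>l \<omega>. \<Sum>j\<in>set l. a (fst \<omega>) j * slen (snd \<omega>) j"])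
      (auto intro!: borel_measurable_sum borel_measurable_times measurable_pmf_fst
        measurable_compose[OF measurable_snd measurable_slen])
  ultimately show ?thesis by simp
qed

lemma measurable_dlRV[measurable]: "dlRV T C \<in> borel_measurable (ens N G)"
proof -
  define a where "a = (\<lambda>(E, i) j. if i \<in> E then proj_matrix E (E - T E) (C E) i j else 0)"
  define r where "r = (\<lambda>(E, i). relaxed E (E - T E) (C E) (\<lambda>_. 0) i)"
  have "dlRV T C = (\<lambda>\<omega>. (if finite (fst (fst \<omega>)) then \<Sum>j\<in>fst (fst \<omega>). a (fst \<omega>) j * slen (snd \<omega>) j
      else r (fst \<omega>)) - slen (snd \<omega>) (snd (fst \<omega>)))"
    by (auto simp: dlRV_def a_def r_def dl_eq_if_finite cong: if_cong)
  also have "\<dots> \<in> borel_measurable (ens N G)"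
    unfolding ens_def
    by (intro borel_measurable_diff measurable_If measurable_pmf_sum_slen measurable_pmf_slen_index)
      (auto simp: pred_def[symmetric] intro: measurable_pmf_fst)
  finally show ?thesis .
qed

lemma measurable_lbarRV[measurable]: "lbarRV \<in> borel_measurable (ens N G)"
  unfolding lbarRV_def[abs_def] ens_def by (rule measurable_pmf_slen_index)

lemma measurable_dl_cond_ens[measurable]:
  assumes "finite E" "finite R"
  shows "(\<lambda>(i, x). dl E R C i x) \<in> borel_measurable (cond_ens N E)"
proof -
  have "(\<lambda>(i, x). dl E R C i x) = (\<lambda>\<omega>. (\<Sum>j\<in>E. (if fst \<omega> \<in> E then proj_matrix E R C (fst \<omega>) j else 0)
      * slen (snd \<omega>) j) - slen (snd \<omega>) (fst \<omega>))"
    by (auto simp: dl_eq_sum_proj_matrix assms cong: if_cong)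
  also have "\<dots> \<in> borel_measurable (cond_ens N E)"
    unfolding cond_ens_def
    by (intro borel_measurable_diff measurable_pmf_slen_index
        measurable_pmf_sum_slen[where S="\<lambda>_. E", simplified])
  finally show ?thesis .
qed

locale cycle_network =
  fixes N M :: nat and E Tr :: "edge set" and Cm :: "edge \<Rightarrow> edge \<Rightarrow> real"
  assumes M_pos: "M > 0" and valid: "valid_net N M E" and cycles: "signed_cycle_matrix N E Tr Cm"
begin

lemma card_E: "card E = M" and E_subset: "E \<subseteq> node_pairs N"
  using valid by (auto simp: valid_net_def node_pairs_def)

lemma finite_E: "finite E" and E_nonempty: "E \<noteq> {}"
  using card_E M_pos card_ge_0_finite by auto

lemma finite_cotree: "finite (E - Tr)"
  using finite_E by simp

lemma card_cotree: "real (card (E - Tr)) = real M - real (N - 1)"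
proof -
  have "Tr \<subseteq> E" "card Tr = N - 1"
    using cycles by (auto simp: signed_cycle_matrix_def spanning_tree_def)
  moreover have "card Tr \<le> M"
    using \<open>Tr \<subseteq> E\<close> card_mono[OF finite_E] card_E by auto
  ultimately show ?thesis
    using card_Diff_subset[OF finite_subset[OF _ finite_E]] card_E by (simp add: of_nat_diff)
qed

lemma sum_diag_proj: "(\<Sum>j\<in>E. proj_matrix E (E - Tr) Cm j j) = real M - real (N - 1)"
proof -
  have "(\<Sum>j\<in>E. proj_matrix E (E - Tr) Cm j j) = real (card (E - Tr))"
  proof (rule sum_diag_proj_matrix[OF finite_E])
    show "\<And>r. r \<in> E - Tr \<Longrightarrow> Cm r r \<noteq> 0"
      using cycles by (auto simp: signed_cycle_matrix_def)
    show "Cm r' r = 0" if "r \<in> E - Tr" "r' \<in> E - Tr" "r \<noteq> r'" for r r'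
      using cycles that unfolding signed_cycle_matrix_def by blast
  qed auto
  then show ?thesis using card_cotree by simp
qed

abbreviation response :: "edge \<Rightarrow> edge \<Rightarrow> real" where
  "response \<equiv> response_matrix E (E - Tr) Cm"

lemma sum_diag_response: "(\<Sum>i\<in>E. response i i) = - real (N - 1)"
  using sum_diag_proj by (simp add: response_matrix_def unit_vec_def sum_subtractf card_E)

lemma sum_sq_response: "(\<Sum>i\<in>E. \<Sum>j\<in>E. (response i j)\<^sup>2) = real (N - 1)"
  using sum_sq_response_matrix[OF finite_E] sum_diag_proj by (simp add: card_E)

lemma dl_eq_sum_response: "i \<in> E \<Longrightarrow> dl E (E - Tr) Cm i x = (\<Sum>j\<in>E. response i j * slen x j)"
  by (rule dl_eq_sum_response_matrix[OF finite_E finite_cotree])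

lemma integral_dl: "i \<in> E \<Longrightarrow> (\<integral>x. dl E (E - Tr) Cm i x \<partial>posM N) = 0"
  by (simp add: dl_eq_sum_response integral_sum_slen[OF finite_E E_subset])

lemma sum_integral_dl_mult:
  fixes g :: "real \<Rightarrow> real"
  assumes "g \<in> borel_measurable borel" and "\<And>u. \<bar>u\<bar> \<le> 1/2 \<Longrightarrow> \<bar>g u\<bar> \<le> K"
  shows "(\<Sum>i\<in>E. \<integral>x. dl E (E - Tr) Cm i x * g (slen x i) \<partial>posM N) = - real (N - 1) * wrap_moment g"
proof -
  have "(\<integral>x. dl E (E - Tr) Cm i x * g (slen x i) \<partial>posM N) = response i i * wrap_moment g"
    if "i \<in> E" for i
    using that E_subset integral_sum_slen_mult(2)[OF finite_E E_subset _ assms, of i "response i"]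
    by (auto simp: dl_eq_sum_response)
  then show ?thesis
    by (simp add: sum_distrib_right[symmetric] sum_diag_response)
qed

lemma sum_integral_dl_add_slen_sq:
  "(\<Sum>i\<in>E. \<integral>x. (dl E (E - Tr) Cm i x + p * slen x i)\<^sup>2 \<partial>posM N)
    = (real (N - 1) - 2 * p * real (N - 1) + p\<^sup>2 * real M) / 12"
proof -
  have "(\<integral>x. (dl E (E - Tr) Cm i x + p * slen x i)\<^sup>2 \<partial>posM N)
      = ((\<Sum>j\<in>E. (response i j)\<^sup>2) + 2 * p * response i i + p\<^sup>2) / 12" if i: "i \<in> E" for i
  proof -
    have "dl E (E - Tr) Cm i x + p * slen x i = (\<Sum>j\<in>E. (response i j + p * unit_vec i j) * slen x j)" for x
      using i finite_E by (simp add: dl_eq_sum_response distrib_right sum.distrib unit_vec_def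
          if_distrib[where f="\<lambda>a. _ * a * _"] cong: if_cong)
    moreover have "(\<Sum>j\<in>E. (response i j + p * unit_vec i j)\<^sup>2)
        = (\<Sum>j\<in>E. (response i j)\<^sup>2 + (if j = i then 2 * p * response i i + p\<^sup>2 else 0))"
      by (intro sum.cong) (auto simp: unit_vec_def power2_eq_square algebra_simps)
    ultimately show ?thesis
      using i finite_E by (simp add: integral_sum_slen_sq[OF finite_E E_subset] sum.distrib)
  qed
  then have "(\<Sum>i\<in>E. \<integral>x. (dl E (E - Tr) Cm i x + p * slen x i)\<^sup>2 \<partial>posM N)
      = (\<Sum>i\<in>E. ((\<Sum>j\<in>E. (response i j)\<^sup>2) + 2 * p * response i i + p\<^sup>2) / 12)"
    by (rule sum.cong[OF refl])
  also have "\<dots> = ((\<Sum>i\<in>E. \<Sum>j\<in>E. (response i j)\<^sup>2) + 2 * p * (\<Sum>i\<in>E. response i i) + real (card E) * p\<^sup>2) / 12"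
    by (simp add: sum_divide_distrib[symmetric] sum.distrib sum_distrib_left)
  finally show ?thesis by (simp add: sum_sq_response sum_diag_response card_E algebra_simps)
qed

lemma sum_integral_dl_sq: "(\<Sum>i\<in>E. \<integral>x. (dl E (E - Tr) Cm i x)\<^sup>2 \<partial>posM N) = real (N - 1) / 12"
  using sum_integral_dl_add_slen_sq[of 0] by simp

end

lemma Var_eq_integral_sq: "(\<integral>\<omega>. X \<omega> \<partial>M) = 0 \<Longrightarrow> Var M X = (\<integral>\<omega>. (X \<omega>)\<^sup>2 \<partial>M)"
  by (simp add: Var_def)

lemma abs_sq_le: "\<bar>x\<bar> \<le> B \<Longrightarrow> \<bar>x\<^sup>2\<bar> \<le> (B::real)\<^sup>2"
  using power_mono[of "\<bar>x\<bar>" B 2] by simp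

lemma abs_lbarRV_le: "\<bar>lbarRV \<omega>\<bar> \<le> 1/2"
  unfolding lbarRV_def slen_def by (rule abs_wrap_le)

locale spring_ensemble =
  fixes N M :: nat and z :: real and G :: "edge set pmf"
    and T :: "edge set \<Rightarrow> edge set" and C :: "edge set \<Rightarrow> edge \<Rightarrow> edge \<Rightarrow> real"
  assumes N_ge_3: "N \<ge> 3" and z_ge_2: "2 \<le> z" and M_eq: "real M = real N * z / 2"
    and support: "\<forall>E \<in> set_pmf G. valid_net N M E \<and> signed_cycle_matrix N E (T E) (C E)"
begin

lemma M_pos: "M > 0"
proof -
  have "real N * z / 2 > 0" using N_ge_3 z_ge_2 by simp
  then show ?thesis using M_eq by simp
qed

lemma ratio_eq: "2 / z * (1 - 1 / real N) = real (N - 1) / real M"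
proof -
  have "real N > 0" "z > 0" "real (N - 1) = real N - 1"
    using N_ge_3 z_ge_2 by (auto simp: of_nat_diff)
  then show ?thesis unfolding M_eq by (simp add: field_simps)
qed

lemma cycle_network: "E \<in> set_pmf G \<Longrightarrow> cycle_network N M E (T E) (C E)"
  using support M_pos by (auto simp: cycle_network_def)

lemma integral_ens_graphwise:
  fixes \<phi> :: "(edge set \<times> edge) \<times> (nat \<Rightarrow> real) \<Rightarrow> real"
  assumes "\<phi> \<in> borel_measurable (ens N G)" "\<And>E i x. E \<in> set_pmf G \<Longrightarrow> \<bar>\<phi> ((E, i), x)\<bar> \<le> B"
    and sum: "\<And>E. E \<in> set_pmf G \<Longrightarrow> (\<Sum>i\<in>E. \<integral>x. \<phi> ((E, i), x) \<partial>posM N) = real M * c"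
  shows "integrable (ens N G) \<phi>" "(\<integral>\<omega>. \<phi> \<omega> \<partial>ens N G) = c"
proof -
  have "finite E \<and> E \<noteq> {} \<and> (\<Sum>i\<in>E. \<integral>x. \<phi> ((E, i), x) \<partial>posM N) / card E = c"
    if E: "E \<in> set_pmf G" for E
  proof -
    interpret cycle_network N M E "T E" "C E" by (rule cycle_network[OF E])
    show ?thesis using finite_E E_nonempty card_E sum[OF E] M_pos by simp
  qed
  then show "integrable (ens N G) \<phi>" "(\<integral>\<omega>. \<phi> \<omega> \<partial>ens N G) = c"
    using integral_ens[OF assms(1,2)] by blast+
qed

lemma abs_dlRV_le:
  assumes "E \<in> set_pmf G"
  shows "\<bar>dlRV T C ((E, i), x)\<bar> \<le> real M / 2 + 1/2"
proof -
  interpret cycle_network N M E "T E" "C E" by (rule cycle_network[OF assms])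
  show ?thesis using abs_dl_le[OF finite_E finite_cotree, of "C E" i x] by (simp add: dlRV_def card_E)
qed

lemma Var_lbarRV: "Var (ens N G) lbarRV = 1/12"
proof -
  have "(\<integral>\<omega>. lbarRV \<omega> \<partial>ens N G) = 0"
  proof (rule integral_ens_graphwise(2)[where B="1/2"])
    fix E assume "E \<in> set_pmf G"
    then interpret cycle_network N M E "T E" "C E" by (rule cycle_network)
    show "(\<Sum>i\<in>E. \<integral>x. lbarRV ((E, i), x) \<partial>posM N) = real M * 0"
      using E_subset by (auto simp: lbarRV_def integral_slen intro!: sum.neutral)
  qed (measurable, rule abs_lbarRV_le)
  moreover have "(\<integral>\<omega>. (lbarRV \<omega>)\<^sup>2 \<partial>ens N G) = 1/12"
  proof (rule integral_ens_graphwise(2)[where B="(1/2)\<^sup>2"])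
    fix E assume "E \<in> set_pmf G"
    then interpret cycle_network N M E "T E" "C E" by (rule cycle_network)
    show "(\<Sum>i\<in>E. \<integral>x. (lbarRV ((E, i), x))\<^sup>2 \<partial>posM N) = real M * (1/12)"
      using E_subset card_E by (simp add: lbarRV_def integral_slen_sq subset_eq)
  qed (measurable, rule abs_sq_le[OF abs_lbarRV_le])
  ultimately show ?thesis by (simp add: Var_eq_integral_sq)
qed


lemma integral_dlRV: "(\<integral>\<omega>. dlRV T C \<omega> \<partial>ens N G) = 0"
proof (rule integral_ens_graphwise(2)[where B="real M / 2 + 1/2"])
  fix E assume "E \<in> set_pmf G"
  then interpret cycle_network N M E "T E" "C E" by (rule cycle_network)
  show "(\<Sum>i\<in>E. \<integral>x. dlRV T C ((E, i), x) \<partial>posM N) = real M * 0"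
    by (simp add: dlRV_def integral_dl)
qed (measurable, rule abs_dlRV_le)

lemma Var_dlRV: "Var (ens N G) (dlRV T C) = real (N - 1) / real M / 12"
proof -
  have "(\<integral>\<omega>. (dlRV T C \<omega>)\<^sup>2 \<partial>ens N G) = real (N - 1) / real M / 12"
  proof (rule integral_ens_graphwise(2)[where B="(real M / 2 + 1/2)\<^sup>2"])
    fix E assume "E \<in> set_pmf G"
    then interpret cycle_network N M E "T E" "C E" by (rule cycle_network)
    show "(\<Sum>i\<in>E. \<integral>x. (dlRV T C ((E, i), x))\<^sup>2 \<partial>posM N) = real M * (real (N - 1) / real M / 12)"
      using M_pos by (simp add: dlRV_def sum_integral_dl_sq)
  qed (measurable, rule abs_sq_le[OF abs_dlRV_le])
  then show ?thesis by (simp add: Var_eq_integral_sq integral_dlRV)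
qed

lemma Var_dl_cond_ens:
  assumes "valid_net N M E" "signed_cycle_matrix N E Tr Cm"
  shows "Var (cond_ens N E) (\<lambda>(i, x). dl E (E - Tr) Cm i x) = real (N - 1) / real M / 12"
proof -
  interpret cycle_network N M E Tr Cm using assms M_pos by unfold_locales
  have bound: "\<bar>(\<lambda>(i, x). dl E (E - Tr) Cm i x) \<omega>\<bar> \<le> real M / 2 + 1/2" for \<omega>
    using abs_dl_le[OF finite_E finite_cotree] card_E by (simp split: prod.splits)
  have "(\<integral>\<omega>. (\<lambda>(i, x). dl E (E - Tr) Cm i x) \<omega> \<partial>cond_ens N E) = 0"
    using integral_cond_ens[OF finite_E E_nonempty _ bound] finite_E finite_cotree
    by (simp add: integral_dl)
  moreover have "(\<integral>\<omega>. ((\<lambda>(i, x). dl E (E - Tr) Cm i x) \<omega>)\<^sup>2 \<partial>cond_ens N E) = real (N - 1) / real M / 12"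
    using integral_cond_ens[OF finite_E E_nonempty _ abs_sq_le[OF bound]] finite_E finite_cotree
    by (simp add: sum_integral_dl_sq card_E)
  ultimately show ?thesis by (simp add: Var_eq_integral_sq)
qed

lemma integral_dlRV_add_lbarRV_sq:
  shows "integrable (ens N G) (\<lambda>\<omega>. (dlRV T C \<omega> + p * lbarRV \<omega>)\<^sup>2)"
    and "(\<integral>\<omega>. (dlRV T C \<omega> + p * lbarRV \<omega>)\<^sup>2 \<partial>ens N G)
      = (real (N - 1) - 2 * p * real (N - 1) + p\<^sup>2 * real M) / 12 / real M"
proof -
  have bound: "\<bar>(dlRV T C ((E, i), x) + p * lbarRV ((E, i), x))\<^sup>2\<bar> \<le> (real M / 2 + 1/2 + \<bar>p\<bar>)\<^sup>2"
    if "E \<in> set_pmf G" for E i x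
  proof (rule abs_sq_le)
    have "\<bar>p * lbarRV ((E, i), x)\<bar> \<le> \<bar>p\<bar>"
      using abs_lbarRV_le[of "((E, i), x)"] by (simp add: abs_mult mult_left_le)
    then show "\<bar>dlRV T C ((E, i), x) + p * lbarRV ((E, i), x)\<bar> \<le> real M / 2 + 1/2 + \<bar>p\<bar>"
      using abs_dlRV_le[OF that, of i x] by linarith
  qed
  have sum: "(\<Sum>i\<in>E. \<integral>x. (dlRV T C ((E, i), x) + p * lbarRV ((E, i), x))\<^sup>2 \<partial>posM N)
      = real M * ((real (N - 1) - 2 * p * real (N - 1) + p\<^sup>2 * real M) / 12 / real M)"
    if "E \<in> set_pmf G" for E
  proof -
    interpret cycle_network N M E "T E" "C E" by (rule cycle_network[OF that])
    show ?thesis using M_pos sum_integral_dl_add_slen_sq[of p] by (simp add: dlRV_def lbarRV_def)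
  qed
  show "integrable (ens N G) (\<lambda>\<omega>. (dlRV T C \<omega> + p * lbarRV \<omega>)\<^sup>2)"
    by (rule integral_ens_graphwise(1)[OF _ bound sum]) measurable
  show "(\<integral>\<omega>. (dlRV T C \<omega> + p * lbarRV \<omega>)\<^sup>2 \<partial>ens N G)
      = (real (N - 1) - 2 * p * real (N - 1) + p\<^sup>2 * real M) / 12 / real M"
    by (rule integral_ens_graphwise(2)[OF _ bound sum]) measurable
qed


lemma integral_dlRV_indicator_lbarRV:
  assumes [measurable]: "B \<in> sets borel"
  shows "(\<integral>\<omega>. dlRV T C \<omega> * indicator B (lbarRV \<omega>) \<partial>ens N G)
    = - (real (N - 1) / real M) * wrap_moment (indicator B)"
proof (rule integral_ens_graphwise(2)[where B="real M / 2 + 1/2"])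
  show "\<bar>dlRV T C ((E, i), x) * indicator B (lbarRV ((E, i), x))\<bar> \<le> real M / 2 + 1/2"
    if "E \<in> set_pmf G" for E i x
    using abs_dlRV_le[OF that, of i x] by (auto simp: indicator_def abs_mult)
  fix E assume "E \<in> set_pmf G"
  then interpret cycle_network N M E "T E" "C E" by (rule cycle_network)
  have "(\<Sum>i\<in>E. \<integral>x. dlRV T C ((E, i), x) * indicator B (lbarRV ((E, i), x)) \<partial>posM N)
      = - real (N - 1) * wrap_moment (indicator B)"
    using sum_integral_dl_mult[of "indicator B" 1] by (simp add: dlRV_def lbarRV_def indicator_def)
  then show "(\<Sum>i\<in>E. \<integral>x. dlRV T C ((E, i), x) * indicator B (lbarRV ((E, i), x)) \<partial>posM N)
      = real M * (- (real (N - 1) / real M) * wrap_moment (indicator B))"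
    using M_pos by simp
qed measurable

lemma integral_lbarRV_indicator_lbarRV:
  assumes [measurable]: "B \<in> sets borel"
  shows "(\<integral>\<omega>. lbarRV \<omega> * indicator B (lbarRV \<omega>) \<partial>ens N G) = wrap_moment (indicator B)"
proof (rule integral_ens_graphwise(2)[where B=1])
  show "\<bar>lbarRV ((E, i), x) * indicator B (lbarRV ((E, i), x))\<bar> \<le> 1" for E i x
    using abs_lbarRV_le[of "((E, i), x)"] by (auto simp: indicator_def)
  fix E assume "E \<in> set_pmf G"
  then interpret cycle_network N M E "T E" "C E" by (rule cycle_network)
  have "(\<integral>x. slen x i * indicator B (slen x i) \<partial>posM N) = wrap_moment (indicator B)" if "i \<in> E" for i
    using that E_subset by (intro integral_slen_mult_self[where K=1]) (auto simp: indicator_def)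
  then show "(\<Sum>i\<in>E. \<integral>x. lbarRV ((E, i), x) * indicator B (lbarRV ((E, i), x)) \<partial>posM N)
      = real M * wrap_moment (indicator B)"
    by (simp add: lbarRV_def card_E)
qed measurable

lemma finite_measure_subalgebra_lbarRV:
  "finite_measure_subalgebra (ens N G) (vimage_algebra (space (ens N G)) lbarRV borel)"
proof -
  have "sets (vimage_algebra (space (ens N G)) lbarRV borel) \<subseteq> sets (ens N G)"
    using measurable_sets[OF measurable_lbarRV] by (auto simp: sets_vimage_algebra2)
  then show ?thesis
    using prob_space_ens
    by (simp add: finite_measure_subalgebra_def finite_measure_subalgebra_axioms_def
        prob_space_def subalgebra_def)
qed

text \<open>Given \<open>l\<close>, the best prediction of \<open>\<Delta>l\<close> is \<open>-p l\<close> with \<open>p = (N - 1)/M\<close>: the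
  contributions of all other springs average out by \<open>integral_slen_mult\<close>.\<close>
lemma real_cond_exp_dlRV:
  "AE \<omega> in ens N G. real_cond_exp (ens N G) (vimage_algebra (space (ens N G)) lbarRV borel) (dlRV T C) \<omega>
    = - (real (N - 1) / real M) * lbarRV \<omega>"
proof -
  interpret finite_measure_subalgebra "ens N G" "vimage_algebra (space (ens N G)) lbarRV borel"
    by (rule finite_measure_subalgebra_lbarRV)
  have int_lbarRV: "integrable (ens N G) (\<lambda>\<omega>. - (real (N - 1) / real M) * lbarRV \<omega>)"
    using abs_lbarRV_le by (intro integrable_mult_right integrable_const_bound[where B="1/2"]) auto
  have int_dlRV: "integrable (ens N G) (dlRV T C)"
    by (rule integral_ens_graphwise(1)[where \<phi>="dlRV T C" and c=0, OF _ abs_dlRV_le])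
      (measurable, auto simp: dlRV_def intro: cycle_network.integral_dl[OF cycle_network] sum.neutral)
  have "lbarRV \<in> borel_measurable (vimage_algebra (space (ens N G)) lbarRV borel)"
    by (rule measurable_vimage_algebra1) simp
  then have meas: "(\<lambda>\<omega>. - (real (N - 1) / real M) * lbarRV \<omega>)
      \<in> borel_measurable (vimage_algebra (space (ens N G)) lbarRV borel)"
    by measurable
  show ?thesis
  proof (rule real_cond_exp_charact[OF _ int_dlRV int_lbarRV meas])
    fix A assume "A \<in> sets (vimage_algebra (space (ens N G)) lbarRV borel)"
    then obtain B where B: "B \<in> sets borel" and A: "A = lbarRV -` B \<inter> space (ens N G)"
      by (auto simp: sets_vimage_algebra2)
    have "set_lebesgue_integral (ens N G) A f = (\<integral>\<omega>. f \<omega> * indicator B (lbarRV \<omega>) \<partial>ens N G)"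
      for f :: "_ \<Rightarrow> real"
      unfolding set_lebesgue_integral_def A
      by (intro Bochner_Integration.integral_cong) (auto simp: indicator_def)
    then show "(\<integral>\<omega>\<in>A. dlRV T C \<omega> \<partial>ens N G) = (\<integral>\<omega>\<in>A. - (real (N - 1) / real M) * lbarRV \<omega> \<partial>ens N G)"
      using integral_dlRV_indicator_lbarRV[OF B] integral_lbarRV_indicator_lbarRV[OF B]
      by (simp add: mult.assoc)
  qed
qed

lemma integral_cond_Var_dlRV:
  defines "p \<equiv> real (N - 1) / real M"
  shows "(\<integral>\<omega>. cond_Var (ens N G) (vimage_algebra (space (ens N G)) lbarRV borel) (dlRV T C) \<omega> \<partial>ens N G)
    = (p - p\<^sup>2) / 12"
proof -
  interpret finite_measure_subalgebra "ens N G" "vimage_algebra (space (ens N G)) lbarRV borel"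
    by (rule finite_measure_subalgebra_lbarRV)
  let ?cond_exp = "real_cond_exp (ens N G) (vimage_algebra (space (ens N G)) lbarRV borel) (dlRV T C)"
  have residual: "AE \<omega> in ens N G. (dlRV T C \<omega> - ?cond_exp \<omega>)\<^sup>2 = (dlRV T C \<omega> + p * lbarRV \<omega>)\<^sup>2"
    using real_cond_exp_dlRV by eventually_elim (simp add: p_def)
  have "(\<integral>\<omega>. cond_Var (ens N G) (vimage_algebra (space (ens N G)) lbarRV borel) (dlRV T C) \<omega> \<partial>ens N G)
      = (\<integral>\<omega>. (dlRV T C \<omega> - ?cond_exp \<omega>)\<^sup>2 \<partial>ens N G)"
    unfolding cond_Var_def
    by (intro real_cond_exp_int(2) integrable_cong_AE[OF _ _ residual, THEN iffD2]
        integral_dlRV_add_lbarRV_sq(1)) measurable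
  also have "\<dots> = (\<integral>\<omega>. (dlRV T C \<omega> + p * lbarRV \<omega>)\<^sup>2 \<partial>ens N G)"
    by (intro integral_cong_AE residual) measurable
  also have "\<dots> = (p - p\<^sup>2) / 12"
    unfolding integral_dlRV_add_lbarRV_sq(2) using M_pos by (simp add: p_def field_simps power2_eq_square)
  finally show ?thesis .
qed

end

theorem mainTheorem4:
  fixes N M :: nat and z :: real and G :: "edge set pmf"
    and T :: "edge set \<Rightarrow> edge set" and C :: "edge set \<Rightarrow> edge \<Rightarrow> edge \<Rightarrow> real"
  assumes "N \<ge> 3" and "2 \<le> z" and "z \<le> real N - 1" and "real M = real N * z / 2"
    and "\<forall>E \<in> set_pmf G. valid_net N M E \<and> signed_cycle_matrix N E (T E) (C E)"
  shows "Var (ens N G) lbarRV = 1 / 12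
    \<and> (\<forall>E Tr Cm. valid_net N M E \<longrightarrow> signed_cycle_matrix N E Tr Cm \<longrightarrow>
         Var (cond_ens N E) (\<lambda>(i, x). dl E (E - Tr) Cm i x)
           = 2 / z * (1 - 1 / real N) * Var (ens N G) lbarRV)
    \<and> Var (ens N G) (dlRV T C) = 2 / z * (1 - 1 / real N) * Var (ens N G) lbarRV
    \<and> (\<integral>\<omega>. cond_Var (ens N G) (vimage_algebra (space (ens N G)) lbarRV borel) (dlRV T C) \<omega> \<partial>ens N G)
         / Var (ens N G) lbarRV
       = 2 / z * (1 - 1 / real N) * (1 - 2 / z * (1 - 1 / real N))"
proof -
  interpret spring_ensemble N M z G T C
    using assms by unfold_locales auto
  show ?thesis
    unfolding ratio_eq Var_lbarRV integral_cond_Var_dlRV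
    using Var_dl_cond_ens Var_dlRV M_pos by (simp add: power2_eq_square field_simps)
qed

end
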